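(* Let $n\ge1$, $N\ge 1$, $\vec p=(p_1,\ldots,p_{n+1})\in(0,\infty)^{n+1}$, and let $T_1,\ldots,T_N$ be $n$-sublinear operators mapping $L^\infty_0(\mathbb R^d;\mathbb C)^n$ into locally integrable functions, with $\mathbf T=\{T_1,\ldots,T_N\}$. Then for all $(\mathbf f^1,\ldots,\mathbf f^{n+1})\in L^\infty_0(\mathbb R^d;\mathbb C^N)^{n+1}$, \[ |\langle\mathbf T(\mathbf f^1,\ldots,\mathbf f^n),\mathbf f^{n+1}\rangle|\le 2\Big(\sup_{k=1,\ldots,N}\|T_k\|_{\vec p}\Big)\int_{\mathbb R^d}\mathrm M_{\vec p,1}(\mathbf f^1,\ldots,\mathbf f^{n+1})(x)\,dx. \]
   Context: $L^\infty_0$ denotes bounded compactly supported functions. For a cube $Q$, $\langle f\rangle_{p,Q}:=\|f\mathbf 1_Q\|_p/|Q|^{1/p}$. A countable collection $\mathcal Q$ of cubes is sparse if there are pairwise disjoint $E_Q\subset Q$ with $|E_Q|>\frac12|Q|$. The sparse $\vec p$ norm $\|T\|_{\vec p}$ of an $n$-sublinear $T$ is the least $C>0$ such that for all $(g^1,\ldots,g^{n+1})\in L^\infty_0(\mathbb R^d;\mathbb C)^{n+1}$ there is a sparse $\mathcal Q$ with $|\langle T(g^1,\ldots,g^n),g^{n+1}\rangle|\le C\sum_{Q\in\mathcal Q}|Q|\prod_{j=1}^{n+1}\langle g^j\rangle_{p_j,Q}$. For $\mathbf f^j=(f^j_1,\ldots,f^j_N)$, $\langle\mathbf T(\mathbf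 f^1,\ldots,\mathbf f^n),\mathbf f^{n+1}\rangle:=\sum_{k=1}^N\langle T_k(f^1_k,\ldots,f^n_k),f^{n+1}_k\rangle$, and $\mathrm M_{\vec p,1}(\mathbf f^1,\ldots,\mathbf f^{n+1})(x):=\sum_{k=1}^N\sup_Q\prod_{j=1}^{n+1}\langle f^j_k\rangle_{p_j,Q}\mathbf 1_Q(x)$, supremum over all cubes $Q\subset\mathbb R^d$. *)

theory Defs
  imports "HOL-Analysis.Analysis"
begin

text \<open>Ambient space R^d is modelled by a euclidean_space type 'a (d = DIM('a)).\<close>

definition Linf0 :: "('a::euclidean_space \<Rightarrow> complex) \<Rightarrow> bool" where
  "Linf0 f \<longleftrightarrow> f \<in> borel_measurable lebesgue \<and> bounded (range f)
     \<and> (\<exists>K. compact K \<and> (\<forall>x. x \<notin> K \<longrightarrow> f x = 0))"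

definition cubes :: "'a::euclidean_space set set" where
  "cubes = {cbox a (a + r *\<^sub>R One) | a r. r > 0}"

definition avg :: "real \<Rightarrow> ('a::euclidean_space \<Rightarrow> complex) \<Rightarrow> 'a set \<Rightarrow> real" where
  "avg p f Q = (LINT x:Q|lebesgue. norm (f x) powr p) powr (1/p)
               / (measure lebesgue Q) powr (1/p)"

definition sparse :: "'a::euclidean_space set set \<Rightarrow> bool" where
  "sparse \<Q> \<longleftrightarrow> countable \<Q> \<and> \<Q> \<subseteq> cubes \<and>
     (\<exists>E. disjoint_family_on E \<Q> \<and>
        (\<forall>Q\<in>\<Q>. E Q \<subseteq> Q \<and> E Q \<in> sets lebesgue
                 \<and> measure lebesgue (E Q) > measure lebesgue Q / 2))"

definition pair :: "('a::euclidean_space \<Rightarrow> complex) \<Rightarrow> ('a \<Rightarrow> complex) \<Rightarrow> complex" where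
  "pair F G = (LINT x|lebesgue. F x * G x)"

text \<open>An n-sublinear operator on L^infinity_0(R^d;C)^n into locally integrable functions.
  Arguments are indexed 0..n-1 (a function nat => ('a => complex)); T only depends on them.\<close>
definition n_sublinear ::
  "nat \<Rightarrow> ((nat \<Rightarrow> 'a::euclidean_space \<Rightarrow> complex) \<Rightarrow> 'a \<Rightarrow> complex) \<Rightarrow> bool" where
  "n_sublinear n T \<longleftrightarrow>
     (\<forall>g g'. (\<forall>j<n. g j = g' j) \<longrightarrow> T g = T g') \<and>
     (\<forall>g. (\<forall>j<n. Linf0 (g j)) \<longrightarrow>
        T g \<in> borel_measurable lebesgue \<and>
        (\<forall>K. compact K \<longrightarrow> set_integrable lebesgue K (T g))) \<and>
     (\<forall>g j h (c::complex). (\<forall>i<n. Linf0 (g i)) \<and> j < n \<and> Linf0 h \<longrightarrow>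
        (AE x in lebesgue. norm (T (g(j := (\<lambda>y. c * g j y))) x) = norm c * norm (T g x)) \<and>
        (AE x in lebesgue. norm (T (g(j := (\<lambda>y. g j y + h y))) x)
              \<le> norm (T g x) + norm (T (g(j := h)) x)))"

text \<open>Sparse bound with constant C; g n is the dual function g^{n+1}.\<close>
definition sparse_bound ::
  "nat \<Rightarrow> (nat \<Rightarrow> real) \<Rightarrow> ((nat \<Rightarrow> 'a::euclidean_space \<Rightarrow> complex) \<Rightarrow> 'a \<Rightarrow> complex)
     \<Rightarrow> real \<Rightarrow> bool" where
  "sparse_bound n p T C \<longleftrightarrow>
     (\<forall>g. (\<forall>j\<le>n. Linf0 (g j)) \<longrightarrow>
        (\<exists>\<Q>. sparse \<Q> \<and>
           ennreal (norm (pair (T g) (g n)))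
             \<le> ennreal C * (\<integral>\<^sup>+ Q. ennreal (measure lebesgue Q * (\<Prod>j\<le>n. avg (p j) (g j) Q))
                                 \<partial>count_space \<Q>)))"

text \<open>Sparse norm ||T||_p: least C > 0 (infimum; = infinity if no such C).\<close>
definition sparse_norm ::
  "nat \<Rightarrow> (nat \<Rightarrow> real) \<Rightarrow> ((nat \<Rightarrow> 'a::euclidean_space \<Rightarrow> complex) \<Rightarrow> 'a \<Rightarrow> complex) \<Rightarrow> ennreal" where
  "sparse_norm n p T = Inf {ennreal C | C. C > 0 \<and> sparse_bound n p T C}"

text \<open>Vector pairing: f j k is the k-th component of f^{j+1}; components k < N.\<close>
definition vec_pair ::
  "nat \<Rightarrow> nat \<Rightarrow> (nat \<Rightarrow> (nat \<Rightarrow> 'a::euclidean_space \<Rightarrow> complex) \<Rightarrow> 'a \<Rightarrow> complex)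
     \<Rightarrow> (nat \<Rightarrow> nat \<Rightarrow> 'a \<Rightarrow> complex) \<Rightarrow> complex" where
  "vec_pair n N T f = (\<Sum>k<N. pair (T k (\<lambda>j. f j k)) (f n k))"

definition M_max ::
  "nat \<Rightarrow> nat \<Rightarrow> (nat \<Rightarrow> real) \<Rightarrow> (nat \<Rightarrow> nat \<Rightarrow> 'a::euclidean_space \<Rightarrow> complex) \<Rightarrow> 'a \<Rightarrow> ennreal" where
  "M_max n N p f x = (\<Sum>k<N. SUP Q\<in>cubes. ennreal ((\<Prod>j\<le>n. avg (p j) (f j k) Q) * indicator Q x))"

end

theory Submission
  imports Defs
begin

text \<open>For each component k, the sparse bound for \<open>T\<^sub>k\<close> controls the pairing by a sum over a sparse
  family; since the sets \<open>E\<^sub>Q\<close> are disjoint and fill more than half of each cube, that sum is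
  at most twice the integral of the function equal to the average over Q on \<open>E\<^sub>Q\<close>, which lies
  below the maximal function. Summing over k and letting the sparse constant decrease to C
  (the infimum defining the sparse norm need not be attained) gives the claim.\<close>

definition cube_maximal :: "('a::euclidean_space set \<Rightarrow> real) \<Rightarrow> 'a \<Rightarrow> ennreal" where
  "cube_maximal a x = (SUP Q\<in>cubes. ennreal (a Q * indicator Q x))"

lemma borel_measurable_nn_integral_count_space:
  fixes f :: "'i \<Rightarrow> 'a \<Rightarrow> ennreal"
  assumes "countable I" and meas: "\<And>i. i \<in> I \<Longrightarrow> f i \<in> borel_measurable M"
  shows "(\<lambda>x. \<integral>\<^sup>+i. f i x \<partial>count_space I) \<in> borel_measurable M"
proof cases
  assume "finite I"
  then show ?thesis
    using meas by (simp add: nn_integral_count_space_finite)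
next
  assume "infinite I"
  then have "I \<noteq> {}"
    by auto
  have "(\<integral>\<^sup>+i. g i \<partial>count_space I) = (\<Sum>m. g (from_nat_into I m))" for g :: "'i \<Rightarrow> ennreal"
    using bij_betw_from_nat_into[OF \<open>countable I\<close> \<open>infinite I\<close>]
    by (simp add: nn_integral_bij_count_space[symmetric] nn_integral_count_space_nat)
  then show ?thesis
    using meas from_nat_into[OF \<open>I \<noteq> {}\<close>] by (simp add: borel_measurable_suminf_order)
qed

lemma avg_nonneg: "avg p f Q \<ge> 0"
  unfolding avg_def by (intro divide_nonneg_nonneg) auto

text \<open>The maximal function need not be measurable; the measurable minorant h is what allows
  the integrals over the components to be added.\<close>

lemma sparse_sum_le_two_nn_integral:
  fixes Qs :: "'a::euclidean_space set set"
  assumes "sparse Qs" and a_nonneg: "\<And>Q. a Q \<ge> 0"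
  obtains h where "h \<in> borel_measurable lebesgue" and "\<And>x. h x \<le> cube_maximal a x"
    and "(\<integral>\<^sup>+Q. ennreal (measure lebesgue Q * a Q) \<partial>count_space Qs) \<le> 2 * (\<integral>\<^sup>+x. h x \<partial>lebesgue)"
proof -
  from \<open>sparse Qs\<close> obtain E where "countable Qs" and "Qs \<subseteq> cubes" and disj: "disjoint_family_on E Qs"
    and E: "\<And>Q. Q \<in> Qs \<Longrightarrow> E Q \<subseteq> Q \<and> E Q \<in> sets lebesgue
      \<and> measure lebesgue (E Q) > measure lebesgue Q / 2"
    unfolding sparse_def by blast
  define h where "h x = (\<integral>\<^sup>+Q. ennreal (a Q) * indicator (E Q) x \<partial>count_space Qs)" for x
  have meas: "(\<lambda>x. ennreal (a Q) * indicator (E Q) x) \<in> borel_measurable lebesgue" if "Q \<in> Qs" for Q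
    using E[OF that] by (intro borel_measurable_times_ennreal borel_measurable_indicator) auto
  have h_meas: "h \<in> borel_measurable lebesgue"
    unfolding h_def using meas \<open>countable Qs\<close> by (simp add: borel_measurable_nn_integral_count_space)
  have h_le: "h x \<le> cube_maximal a x" for x
  proof (cases "\<exists>Q\<in>Qs. x \<in> E Q")
    case True
    then obtain Q where Q: "Q \<in> Qs" "x \<in> E Q"
      by blast
    have "h x = (\<integral>\<^sup>+R. ennreal (a Q) * indicator {Q} R \<partial>count_space Qs)"
      unfolding h_def using disj Q
      by (intro nn_integral_cong) (auto simp: disjoint_family_on_def split: split_indicator)
    also have "\<dots> = ennreal (a Q * indicator Q x)"
      using Q E[OF Q(1)] by (auto simp: nn_integral_cmult_indicator)
    also have "\<dots> \<le> cube_maximal a x"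
      unfolding cube_maximal_def using Q \<open>Qs \<subseteq> cubes\<close> by (intro SUP_upper) auto
    finally show ?thesis .
  next
    case False
    then have "h x = (\<integral>\<^sup>+Q. 0 \<partial>count_space Qs)"
      unfolding h_def by (intro nn_integral_cong) auto
    then show ?thesis
      by simp
  qed
  have "ennreal (measure lebesgue Q * a Q) \<le> 2 * (ennreal (a Q) * emeasure lebesgue (E Q))"
    if "Q \<in> Qs" for Q
  proof -
    have "emeasure lebesgue (E Q) = ennreal (measure lebesgue (E Q))"
    proof (rule emeasure_eq_ennreal_measure)
      have "measure lebesgue (E Q) \<noteq> 0"
        using E[OF that] measure_nonneg[of lebesgue Q] by linarith
      then show "emeasure lebesgue (E Q) \<noteq> top"
        by (auto simp: measure_def)
    qed
    have "measure lebesgue Q * a Q \<le> (2 * measure lebesgue (E Q)) * a Q"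
      using E[OF that] a_nonneg[of Q] by (intro mult_right_mono) auto
    then have "ennreal (measure lebesgue Q * a Q) \<le> ennreal (2 * (a Q * measure lebesgue (E Q)))"
      by (intro ennreal_leI) (simp add: ac_simps)
    also have "\<dots> = 2 * (ennreal (a Q) * emeasure lebesgue (E Q))"
      using \<open>emeasure lebesgue (E Q) = _\<close> a_nonneg[of Q] by (simp add: ennreal_mult)
    finally show ?thesis .
  qed
  then have "(\<integral>\<^sup>+Q. ennreal (measure lebesgue Q * a Q) \<partial>count_space Qs)
      \<le> (\<integral>\<^sup>+Q. 2 * (ennreal (a Q) * emeasure lebesgue (E Q)) \<partial>count_space Qs)"
    by (intro nn_integral_mono) auto
  also have "\<dots> = 2 * (\<integral>\<^sup>+Q. ennreal (a Q) * emeasure lebesgue (E Q) \<partial>count_space Qs)"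
    by (simp add: nn_integral_cmult)
  also have "\<dots> = 2 * (\<integral>\<^sup>+Q. \<integral>\<^sup>+x. ennreal (a Q) * indicator (E Q) x \<partial>lebesgue \<partial>count_space Qs)"
    using E by (intro arg_cong2[where f="(*)"] refl nn_integral_cong) (simp add: nn_integral_cmult_indicator)
  also have "\<dots> = 2 * (\<integral>\<^sup>+x. h x \<partial>lebesgue)"
    unfolding h_def using meas by (simp add: nn_integral_count_space_nn_integral[OF \<open>countable Qs\<close>])
  finally show ?thesis
    by (rule that[OF h_meas h_le])
qed

lemma sparse_bound_mono:
  assumes "sparse_bound n p T C" and "C \<le> C'"
  shows "sparse_bound n p T C'"
  unfolding sparse_bound_def
proof (intro allI impI)
  fix g :: "nat \<Rightarrow> 'a \<Rightarrow> complex"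
  assume "\<forall>j\<le>n. Linf0 (g j)"
  with assms(1) obtain Qs where "sparse Qs" and bound: "ennreal (norm (pair (T g) (g n)))
      \<le> ennreal C * (\<integral>\<^sup>+Q. ennreal (measure lebesgue Q * (\<Prod>j\<le>n. avg (p j) (g j) Q)) \<partial>count_space Qs)"
    unfolding sparse_bound_def by blast
  moreover have "ennreal C \<le> ennreal C'"
    using \<open>C \<le> C'\<close> by (rule ennreal_leI)
  ultimately show "\<exists>Qs. sparse Qs \<and> ennreal (norm (pair (T g) (g n)))
      \<le> ennreal C' * (\<integral>\<^sup>+Q. ennreal (measure lebesgue Q * (\<Prod>j\<le>n. avg (p j) (g j) Q)) \<partial>count_space Qs)"
    by (meson mult_right_mono order_trans zero_le)
qed

lemma sparse_bound_of_sparse_norm_less: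
  assumes "sparse_norm n p T < ennreal C"
  shows "sparse_bound n p T C"
proof -
  from assms obtain C0 where "sparse_bound n p T C0" and "ennreal C0 < ennreal C" and "C0 > 0"
    unfolding sparse_norm_def by (auto simp: Inf_less_iff)
  then show ?thesis
    by (auto intro: sparse_bound_mono simp: ennreal_less_iff)
qed

lemma pair_le_maximal_of_sparse_bound:
  assumes "sparse_bound n p T C" and "\<And>j. j \<le> n \<Longrightarrow> Linf0 (g j)"
  obtains h where "h \<in> borel_measurable lebesgue"
    and "\<And>x. h x \<le> cube_maximal (\<lambda>Q. \<Prod>j\<le>n. avg (p j) (g j) Q) x"
    and "ennreal (norm (pair (T g) (g n))) \<le> 2 * ennreal C * (\<integral>\<^sup>+x. h x \<partial>lebesgue)"
proof -
  from assms obtain Qs where "sparse Qs" and bound: "ennreal (norm (pair (T g) (g n)))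
      \<le> ennreal C * (\<integral>\<^sup>+Q. ennreal (measure lebesgue Q * (\<Prod>j\<le>n. avg (p j) (g j) Q)) \<partial>count_space Qs)"
    unfolding sparse_bound_def by blast
  have nonneg: "(\<Prod>j\<le>n. avg (p j) (g j) Q) \<ge> 0" for Q
    by (simp add: avg_nonneg prod_nonneg)
  obtain h where "h \<in> borel_measurable lebesgue"
    and "\<And>x. h x \<le> cube_maximal (\<lambda>Q. \<Prod>j\<le>n. avg (p j) (g j) Q) x"
    and sum_le: "(\<integral>\<^sup>+Q. ennreal (measure lebesgue Q * (\<Prod>j\<le>n. avg (p j) (g j) Q)) \<partial>count_space Qs)
      \<le> 2 * (\<integral>\<^sup>+x. h x \<partial>lebesgue)"
    by (rule sparse_sum_le_two_nn_integral[where a = "\<lambda>Q. \<Prod>j\<le>n. avg (p j) (g j) Q", OF \<open>sparse Qs\<close> nonneg]) blast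
  moreover have "ennreal (norm (pair (T g) (g n))) \<le> ennreal C * (2 * (\<integral>\<^sup>+x. h x \<partial>lebesgue))"
    using bound sum_le by (rule order_trans[OF _ mult_left_mono]) simp
  ultimately show ?thesis
    by (intro that) (simp_all add: ac_simps)
qed

lemma ennreal_le_mult_of_le_mult_greater:
  fixes x B :: ennreal
  assumes "C > 0" and le: "\<And>C'. C' > C \<Longrightarrow> x \<le> ennreal C' * B"
  shows "x \<le> ennreal C * B"
proof (rule tendsto_lowerbound)
  have "((\<lambda>C'. ennreal C') \<longlongrightarrow> ennreal C) (at_right C)"
    by (intro tendsto_ennrealI tendsto_ident_at)
  then show "((\<lambda>C'. ennreal C' * B) \<longlongrightarrow> ennreal C * B) (at_right C)"
    using \<open>C > 0\<close> by (intro tendsto_mult_ennreal tendsto_const) auto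
  show "\<forall>\<^sub>F C' in at_right C. x \<le> ennreal C' * B"
    using le by (auto simp: eventually_at_right_field intro!: exI[of _ "C + 1"])
qed simp

lemma norm_vec_pair_le_M_max:
  assumes bound: "\<And>k. k < N \<Longrightarrow> sparse_bound n p (T k) C"
    and Linf0: "\<And>j k. j \<le> n \<Longrightarrow> k < N \<Longrightarrow> Linf0 (f j k)"
  shows "ennreal (norm (vec_pair n N T f)) \<le> 2 * ennreal C * (\<integral>\<^sup>+x. M_max n N p f x \<partial>lebesgue)"
proof -
  define pair\<^sub>k where "pair\<^sub>k k = norm (pair (T k (\<lambda>j. f j k)) (f n k))" for k
  have "\<forall>k\<in>{..<N}. \<exists>h. h \<in> borel_measurable lebesgue
      \<and> (\<forall>x. h x \<le> cube_maximal (\<lambda>Q. \<Prod>j\<le>n. avg (p j) (f j k) Q) x)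
      \<and> ennreal (pair\<^sub>k k) \<le> 2 * ennreal C * (\<integral>\<^sup>+x. h x \<partial>lebesgue)"
    (is "\<forall>k\<in>_. \<exists>h. ?maximal_bound k h")
  proof
    fix k
    assume "k \<in> {..<N}"
    then have "k < N"
      by simp
    obtain h where "h \<in> borel_measurable lebesgue"
      and "\<And>x. h x \<le> cube_maximal (\<lambda>Q. \<Prod>j\<le>n. avg (p j) (f j k) Q) x"
      and "ennreal (pair\<^sub>k k) \<le> 2 * ennreal C * (\<integral>\<^sup>+x. h x \<partial>lebesgue)"
      unfolding pair\<^sub>k_def
      by (rule pair_le_maximal_of_sparse_bound[OF bound[OF \<open>k < N\<close>] Linf0[OF _ \<open>k < N\<close>]]) blast+
    then show "\<exists>h. ?maximal_bound k h"
      by blast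
  qed
  then obtain h where h: "\<forall>k\<in>{..<N}. h k \<in> borel_measurable lebesgue
      \<and> (\<forall>x. h k x \<le> cube_maximal (\<lambda>Q. \<Prod>j\<le>n. avg (p j) (f j k) Q) x)
      \<and> ennreal (pair\<^sub>k k) \<le> 2 * ennreal C * (\<integral>\<^sup>+x. h k x \<partial>lebesgue)"
    by (auto dest: bchoice)
  have "ennreal (norm (vec_pair n N T f)) \<le> ennreal (\<Sum>k<N. pair\<^sub>k k)"
    unfolding vec_pair_def pair\<^sub>k_def by (intro ennreal_leI norm_sum)
  also have "\<dots> = (\<Sum>k<N. ennreal (pair\<^sub>k k))"
    by (simp add: pair\<^sub>k_def)
  also have "\<dots> \<le> (\<Sum>k<N. 2 * ennreal C * (\<integral>\<^sup>+x. h k x \<partial>lebesgue))"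
    using h by (intro sum_mono) blast
  also have "\<dots> = 2 * ennreal C * (\<integral>\<^sup>+x. (\<Sum>k<N. h k x) \<partial>lebesgue)"
    using h by (subst nn_integral_sum) (auto simp: sum_distrib_left)
  also have "\<dots> \<le> 2 * ennreal C * (\<integral>\<^sup>+x. M_max n N p f x \<partial>lebesgue)"
    unfolding M_max_def cube_maximal_def[symmetric]
    using h by (intro mult_left_mono nn_integral_mono sum_mono) auto
  finally show ?thesis .
qed

theorem lemma1p3:
  fixes n N :: nat and p :: "nat \<Rightarrow> real"
    and T :: "nat \<Rightarrow> (nat \<Rightarrow> 'a::euclidean_space \<Rightarrow> complex) \<Rightarrow> 'a \<Rightarrow> complex"
    and f :: "nat \<Rightarrow> nat \<Rightarrow> 'a \<Rightarrow> complex"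
  assumes "n \<ge> 1" and "N \<ge> 1"
    and "\<forall>j\<le>n. p j > 0"
    and "\<forall>k<N. n_sublinear n (T k)"
    and "\<forall>j\<le>n. \<forall>k<N. Linf0 (f j k)"
  shows "\<forall>C::real. C > 0 \<and> (SUP k\<in>{..<N}. sparse_norm n p (T k)) \<le> ennreal C \<longrightarrow>
           ennreal (norm (vec_pair n N T f))
             \<le> 2 * ennreal C * (\<integral>\<^sup>+ x. M_max n N p f x \<partial>lebesgue)"
proof (intro allI impI)
  fix C :: real
  assume C: "C > 0 \<and> (SUP k\<in>{..<N}. sparse_norm n p (T k)) \<le> ennreal C"
  have bound_greater:
    "ennreal (norm (vec_pair n N T f)) \<le> ennreal C' * (2 * (\<integral>\<^sup>+x. M_max n N p f x \<partial>lebesgue))"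
    if "C' > C" for C'
  proof -
    have "sparse_norm n p (T k) < ennreal C'" if "k < N" for k
    proof -
      have "sparse_norm n p (T k) \<le> (SUP k\<in>{..<N}. sparse_norm n p (T k))"
        using \<open>k < N\<close> by (intro SUP_upper) simp
      also have "\<dots> \<le> ennreal C"
        using C by blast
      also have "\<dots> < ennreal C'"
        using C \<open>C' > C\<close> by (simp add: ennreal_lessI)
      finally show ?thesis .
    qed
    then have "ennreal (norm (vec_pair n N T f)) \<le> 2 * ennreal C' * (\<integral>\<^sup>+x. M_max n N p f x \<partial>lebesgue)"
      using assms(5) by (intro norm_vec_pair_le_M_max sparse_bound_of_sparse_norm_less) auto
    then show ?thesis
      by (simp add: ac_simps)
  qed
  have "ennreal (norm (vec_pair n N T f)) \<le> ennreal C * (2 * (\<integral>\<^sup>+x. M_max n N p f x \<partial>lebesgue))"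
    using C bound_greater by (blast intro: ennreal_le_mult_of_le_mult_greater)
  then show "ennreal (norm (vec_pair n N T f)) \<le> 2 * ennreal C * (\<integral>\<^sup>+x. M_max n N p f x \<partial>lebesgue)"
    by (simp add: ac_simps)
qed

end
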